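(* Let $R \in \mathfrak{D}$ and $\mathfrak{D}' \subseteq \mathfrak{D}$, and suppose that one of the following holds: (i) $\mathfrak{D}' = \mathfrak{D}$; (ii) $R \in \mathfrak{T}_a$ and $\mathfrak{T}_a \subseteq \mathfrak{D}' \subseteq \mathfrak{D}$; (iii) $\mathfrak{D}' = \mathfrak{P}$ or $\mathfrak{D}' = \mathfrak{P}^*$, and $R \in \mathfrak{D}'$. Then for every $S \in \mathfrak{D}$ the following are equivalent: (a) $R \sqsubseteq_\Gamma S$ with respect to $\mathfrak{D}'$; (b) $\# \mathcal{S}(G,R) \leq \# \mathcal{S}(G,S)$ for all $G \in \mathfrak{D}'$. Moreover, (b) implies $\# \mathcal{H}(G,R) \leq \# \mathcal{H}(G,S)$ for all $G \in \mathfrak{D}'$.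
   Context: **Digraphs and homomorphisms.** - A digraph $G$ is a pair $(V(G),A(G))$, where $V(G)$ is a finite non-empty set and $A(G) \subseteq V(G)\times V(G)$. Arcs are written $vw$. - An arc $vv$ is a loop. An arc $vw$ with $v\neq w$ is proper. $G^*$ denotes $G$ with all loops removed. - A homomorphism $\xi: G\to H$ is a map $V(G)\to V(H)$ such that $\xi(v)\xi(w)\in A(H)$ for all $vw\in A(G)$. $\mathcal{H}(G,H)$ is the set of homomorphisms. - A homomorphism is strict if it maps every proper arc of $G$ to a proper arc of $H$. $\mathcal{S}(G,H)$ is the set of strict homomorphisms from $G$ to $H$. - A walk in $G$ is a sequence $v_0,\dots,v_I$ with $I\geq 1$ and $v_{i-1}v_i\in A(G)$ for all $i$. It is closed if $v_0=v_I$, and trivial if all $v_i$ are equal. **Classes of digraphs.** - $\mathfrak{D}$ is the class of all digraphs. - $\mathfrak{P}$ is the class of finite posets, i.e. reflexive, antisymmetric, transitive digraphs. - $\mathfrak{P}^* = \{P^* : P\in\mathfrak{P}\}$. - $\mathfrak{T}_a = \{G\in\mathfrak{D} : G^* \text{ contains no closed walk}\}$. Equivalently, every closed walk in $G$ is trivial. **Connectivity.** - Two vertices $u,w$ are adjacent if $uw\in A(G)$ or $wu\in A(G)$. - For $X\subseteq V(G)$ and $v,w\in X$, the vertices $v$ and $w$ are connected in $X$ if $v=w$, or if there are $z_0=v,z_1,\dots,z_I=w$ in $X$ with $z_{i-1},z_i$ adjacent for all $i$. - $\gamma_X(v)$ is the set of $w\in X$ connected to $v$ in $X$. - For any map $\xi$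 from $V(G)$ to a set, $\Gamma_\xi(v) := \gamma_{\xi^{-1}(\xi(v))}(v)$. **Schemes.** - For a class $\mathfrak{D}'\subseteq\mathfrak{D}$, let $\mathfrak{D}'_r$ be a fixed system of representatives of $\mathfrak{D}'$ up to isomorphism. - For $R,S\in\mathfrak{D}$, a Hom-scheme from $R$ to $S$ with respect to $\mathfrak{D}'$ is a family $\rho=(\rho_G)_{G\in\mathfrak{D}'_r}$ of maps $\rho_G:\mathcal{H}(G,R)\to\mathcal{H}(G,S)$. - It is strong if every $\rho_G$ is injective. - It is a $\Gamma$-scheme if $\Gamma_{\rho_G(\xi)}(v)=\Gamma_\xi(v)$ for all $G\in\mathfrak{D}'_r$, $\xi\in\mathcal{H}(G,R)$ and $v\in V(G)$. - $R\sqsubseteq_\Gamma S$ with respect to $\mathfrak{D}'$ means that a strong $\Gamma$-scheme from $R$ to $S$ with respect to $\mathfrak{D}'$ exists. *)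

theory Defs
  imports "HOL-Library.FuncSet"
begin

type_synonym 'a digraph = "'a set \<times> ('a \<times> 'a) set"

definition verts :: "'a digraph \<Rightarrow> 'a set" where "verts G = fst G"
definition arcs :: "'a digraph \<Rightarrow> ('a \<times> 'a) set" where "arcs G = snd G"

definition is_digraph :: "'a digraph \<Rightarrow> bool" where
  "is_digraph G \<longleftrightarrow> finite (verts G) \<and> verts G \<noteq> {} \<and> arcs G \<subseteq> verts G \<times> verts G"

definition loopfree :: "'a digraph \<Rightarrow> 'a digraph" where
  "loopfree G = (verts G, {(v, w) \<in> arcs G. v \<noteq> w})"

text \<open>Maps V(G) -> V(H) are represented extensionally (undefined outside V(G)).\<close>
definition Hom :: "'a digraph \<Rightarrow> 'b digraph \<Rightarrow> ('a \<Rightarrow> 'b) set" where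
  "Hom G H = {\<xi> \<in> verts G \<rightarrow>\<^sub>E verts H. \<forall>(v, w) \<in> arcs G. (\<xi> v, \<xi> w) \<in> arcs H}"

definition Strict :: "'a digraph \<Rightarrow> 'b digraph \<Rightarrow> ('a \<Rightarrow> 'b) set" where
  "Strict G H = {\<xi> \<in> Hom G H. \<forall>(v, w) \<in> arcs G. v \<noteq> w \<longrightarrow> \<xi> v \<noteq> \<xi> w}"

definition digraph_iso :: "'a digraph \<Rightarrow> 'b digraph \<Rightarrow> bool" where
  "digraph_iso G H \<longleftrightarrow> (\<exists>f. bij_betw f (verts G) (verts H) \<and>
     (\<forall>v \<in> verts G. \<forall>w \<in> verts G. (v, w) \<in> arcs G \<longleftrightarrow> (f v, f w) \<in> arcs H))"

text \<open>A walk v_0,...,v_I with I >= 1, as a list of length I+1.\<close>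
definition is_walk :: "'a digraph \<Rightarrow> 'a list \<Rightarrow> bool" where
  "is_walk G vs \<longleftrightarrow> length vs \<ge> 2 \<and> (\<forall>i. Suc i < length vs \<longrightarrow> (vs ! i, vs ! Suc i) \<in> arcs G)"

definition is_closed_walk :: "'a digraph \<Rightarrow> 'a list \<Rightarrow> bool" where
  "is_closed_walk G vs \<longleftrightarrow> is_walk G vs \<and> hd vs = last vs"

definition is_poset :: "'a digraph \<Rightarrow> bool" where
  "is_poset G \<longleftrightarrow> is_digraph G
     \<and> (\<forall>v \<in> verts G. (v, v) \<in> arcs G)
     \<and> (\<forall>v w. (v, w) \<in> arcs G \<and> (w, v) \<in> arcs G \<longrightarrow> v = w)
     \<and> (\<forall>u v w. (u, v) \<in> arcs G \<and> (v, w) \<in> arcs G \<longrightarrow> (u, w) \<in> arcs G)"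

definition is_poset_star :: "'a digraph \<Rightarrow> bool" where
  "is_poset_star G \<longleftrightarrow> (\<exists>P. is_poset P \<and> G = loopfree P)"

definition in_Ta :: "'a digraph \<Rightarrow> bool" where
  "in_Ta G \<longleftrightarrow> is_digraph G \<and> \<not> (\<exists>vs. is_closed_walk (loopfree G) vs)"

definition adjacent :: "'a digraph \<Rightarrow> 'a \<Rightarrow> 'a \<Rightarrow> bool" where
  "adjacent G u w \<longleftrightarrow> (u, w) \<in> arcs G \<or> (w, u) \<in> arcs G"

definition connected_in :: "'a digraph \<Rightarrow> 'a set \<Rightarrow> 'a \<Rightarrow> 'a \<Rightarrow> bool" where
  "connected_in G X v w \<longleftrightarrow> v = w \<or>
     (\<exists>zs. length zs \<ge> 2 \<and> hd zs = v \<and> last zs = w \<and> set zs \<subseteq> X \<and>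
        (\<forall>i. Suc i < length zs \<longrightarrow> adjacent G (zs ! i) (zs ! Suc i)))"

definition gamma :: "'a digraph \<Rightarrow> 'a set \<Rightarrow> 'a \<Rightarrow> 'a set" where
  "gamma G X v = {w \<in> X. connected_in G X v w}"

definition Gamma :: "'a digraph \<Rightarrow> ('a \<Rightarrow> 'b) \<Rightarrow> 'a \<Rightarrow> 'a set" where
  "Gamma G \<xi> v = gamma G {u \<in> verts G. \<xi> u = \<xi> v} v"

text \<open>Dr is a system of representatives of the class D' up to isomorphism.
  Test digraphs G live on vertex type nat (every finite digraph is isomorphic to one).\<close>
definition rep_system :: "nat digraph set \<Rightarrow> nat digraph set \<Rightarrow> bool" where
  "rep_system Dr D' \<longleftrightarrow> Dr \<subseteq> D' \<and> (\<forall>G \<in> D'. \<exists>!H. H \<in> Dr \<and> digraph_iso G H)"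

definition hom_scheme ::
  "nat digraph set \<Rightarrow> 'a digraph \<Rightarrow> 'b digraph \<Rightarrow> (nat digraph \<Rightarrow> (nat \<Rightarrow> 'a) \<Rightarrow> (nat \<Rightarrow> 'b)) \<Rightarrow> bool" where
  "hom_scheme Dr R S \<rho> \<longleftrightarrow> (\<forall>G \<in> Dr. \<forall>\<xi> \<in> Hom G R. \<rho> G \<xi> \<in> Hom G S)"

definition strong_scheme ::
  "nat digraph set \<Rightarrow> 'a digraph \<Rightarrow> (nat digraph \<Rightarrow> (nat \<Rightarrow> 'a) \<Rightarrow> (nat \<Rightarrow> 'b)) \<Rightarrow> bool" where
  "strong_scheme Dr R \<rho> \<longleftrightarrow> (\<forall>G \<in> Dr. inj_on (\<rho> G) (Hom G R))"

definition Gamma_scheme ::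
  "nat digraph set \<Rightarrow> 'a digraph \<Rightarrow> (nat digraph \<Rightarrow> (nat \<Rightarrow> 'a) \<Rightarrow> (nat \<Rightarrow> 'b)) \<Rightarrow> bool" where
  "Gamma_scheme Dr R \<rho> \<longleftrightarrow>
     (\<forall>G \<in> Dr. \<forall>\<xi> \<in> Hom G R. \<forall>v \<in> verts G. Gamma G (\<rho> G \<xi>) v = Gamma G \<xi> v)"

definition gamma_below :: "nat digraph set \<Rightarrow> 'a digraph \<Rightarrow> 'b digraph \<Rightarrow> bool" where
  "gamma_below Dr R S \<longleftrightarrow>
     (\<exists>\<rho>. hom_scheme Dr R S \<rho> \<and> strong_scheme Dr R \<rho> \<and> Gamma_scheme Dr R \<rho>)"

end

theory Submission
  imports Defs
begin

text \<open>A homomorphism \<open>\<xi> : G \<rightarrow> R\<close> is constant on the \<open>\<Gamma>\<close>-components of its fibres, so it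
  factors as the contraction of \<open>G\<close> onto the quotient \<open>Q = G/\<xi>\<close> whose vertices are these
  components, followed by a strict homomorphism \<open>\<xi>' : Q \<rightarrow> R\<close>. If \<open>#\<S>(Q,R) \<le> #\<S>(Q,S)\<close>
  for every test digraph \<open>Q\<close>, fix injections \<open>\<iota>\<^sub>Q : \<S>(Q,R) \<rightarrow> \<S>(Q,S)\<close> and send \<open>\<xi>\<close> to
  \<open>\<iota>\<^sub>Q(\<xi>')\<close> after the contraction. As \<open>\<iota>\<^sub>Q(\<xi>')\<close> is strict, the result has the same
  \<open>\<Gamma>\<close>-components as \<open>\<xi>\<close>; so \<open>Q\<close>, and then \<open>\<xi>'\<close>, can be recovered from the image, which
  makes the scheme injective. The hypotheses on \<open>\<D>'\<close> guarantee that \<open>Q\<close> is again a test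
  digraph (for posets only after taking the transitive closure, which the strict map into the
  poset \<open>R\<close> still respects). Conversely, strict homomorphisms are exactly those with singleton
  \<open>\<Gamma>\<close>-components, so a \<open>\<Gamma>\<close>-scheme maps \<open>\<S>(G,R)\<close> injectively into \<open>\<S>(G,S)\<close>, and
  \<open>\<H>(G,R)\<close> into \<open>\<H>(G,S)\<close>.\<close>

lemma HomI:
  "\<xi> \<in> verts G \<rightarrow>\<^sub>E verts H \<Longrightarrow> (\<And>v w. (v, w) \<in> arcs G \<Longrightarrow> (\<xi> v, \<xi> w) \<in> arcs H) \<Longrightarrow> \<xi> \<in> Hom G H"
  unfolding Hom_def by blast

lemma Hom_PiE: "\<xi> \<in> Hom G H \<Longrightarrow> \<xi> \<in> verts G \<rightarrow>\<^sub>E verts H"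
  unfolding Hom_def by blast

lemma Hom_arc: "\<xi> \<in> Hom G H \<Longrightarrow> (v, w) \<in> arcs G \<Longrightarrow> (\<xi> v, \<xi> w) \<in> arcs H"
  unfolding Hom_def by blast

lemma StrictI:
  "\<xi> \<in> Hom G H \<Longrightarrow> (\<And>v w. (v, w) \<in> arcs G \<Longrightarrow> v \<noteq> w \<Longrightarrow> \<xi> v \<noteq> \<xi> w) \<Longrightarrow> \<xi> \<in> Strict G H"
  unfolding Strict_def by blast

lemma Strict_subset_Hom: "Strict G H \<subseteq> Hom G H"
  unfolding Strict_def by blast

lemma Strict_neq: "\<xi> \<in> Strict G H \<Longrightarrow> (v, w) \<in> arcs G \<Longrightarrow> v \<noteq> w \<Longrightarrow> \<xi> v \<noteq> \<xi> w"
  unfolding Strict_def by auto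

lemma arc_in_verts: "is_digraph G \<Longrightarrow> (v, w) \<in> arcs G \<Longrightarrow> v \<in> verts G \<and> w \<in> verts G"
  unfolding is_digraph_def by blast

lemma finite_Hom: "finite (verts G) \<Longrightarrow> finite (verts H) \<Longrightarrow> finite (Hom G H)"
  by (rule finite_subset[of _ "verts G \<rightarrow>\<^sub>E verts H"]) (auto simp: Hom_def intro: finite_PiE)

lemma finite_Strict: "finite (verts G) \<Longrightarrow> finite (verts H) \<Longrightarrow> finite (Strict G H)"
  using finite_Hom Strict_subset_Hom by (rule finite_subset[rotated])

section \<open>Connectivity as a transitive closure\<close>

definition adjacency_within :: "'a digraph \<Rightarrow> 'a set \<Rightarrow> 'a rel" where
  "adjacency_within G X = {(a, b). a \<in> X \<and> b \<in> X \<and> adjacent G a b}"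

lemma sym_adjacency_within: "sym (adjacency_within G X)"
  unfolding sym_def adjacency_within_def adjacent_def by auto

lemma connected_in_iff_trancl:
  "connected_in G X v w \<longleftrightarrow> v = w \<or> (v, w) \<in> (adjacency_within G X)\<^sup>+"
proof
  assume "connected_in G X v w"
  then show "v = w \<or> (v, w) \<in> (adjacency_within G X)\<^sup>+"
  proof (unfold connected_in_def, elim disjE exE conjE)
    fix zs assume len: "2 \<le> length zs" and ends: "hd zs = v" "last zs = w" and X: "set zs \<subseteq> X"
      and adj: "\<forall>i. Suc i < length zs \<longrightarrow> adjacent G (zs ! i) (zs ! Suc i)"
    define n where "n = length zs - 1"
    have "(zs ! i, zs ! Suc i) \<in> adjacency_within G X" if "i < n" for i
      using that adj X unfolding n_def adjacency_within_def by (auto dest: nth_mem)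
    then have "(zs ! 0, zs ! n) \<in> adjacency_within G X ^^ n"
      by (auto simp: relpow_fun_conv)
    moreover have "zs ! 0 = v" "zs ! n = w" "n > 0"
      using ends len hd_conv_nth[of zs] last_conv_nth[of zs] by (force simp: n_def)+
    ultimately show ?thesis by (auto simp: trancl_power)
  qed simp
next
  assume "v = w \<or> (v, w) \<in> (adjacency_within G X)\<^sup>+"
  then show "connected_in G X v w"
  proof
    assume "(v, w) \<in> (adjacency_within G X)\<^sup>+"
    then obtain n f where n: "n > 0" "f 0 = v" "f n = w"
      and step: "\<And>i. i < n \<Longrightarrow> (f i, f (Suc i)) \<in> adjacency_within G X"
      by (auto simp: trancl_power relpow_fun_conv)
    define zs where "zs = map f [0..<Suc n]"
    have "f i \<in> X" if "i \<le> n" for i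
    proof (cases "i < n")
      case True
      then show ?thesis using step by (auto simp: adjacency_within_def)
    next
      case False
      then have "i = Suc (n - 1)" using that n by simp
      then show ?thesis using step[of "n - 1"] n by (auto simp: adjacency_within_def)
    qed
    then have "set zs \<subseteq> X" by (auto simp: zs_def)
    moreover have "\<forall>i. Suc i < length zs \<longrightarrow> adjacent G (zs ! i) (zs ! Suc i)"
      using step by (auto simp: zs_def adjacency_within_def simp del: upt_Suc)
    moreover have "hd zs = v" "last zs = w" "length zs \<ge> 2"
      using n by (auto simp: zs_def hd_map last_map simp del: upt_Suc)
    ultimately show ?thesis unfolding connected_in_def by blast
  qed (simp add: connected_in_def)
qed

lemma gamma_eq_rtrancl_Image: "v \<in> X \<Longrightarrow> gamma G X v = (adjacency_within G X)\<^sup>* `` {v}"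
proof -
  have "adjacency_within G X \<subseteq> X \<times> X" unfolding adjacency_within_def by blast
  then have "(adjacency_within G X)\<^sup>+ \<subseteq> X \<times> X" by (rule trancl_subset_Sigma)
  moreover assume "v \<in> X"
  ultimately show ?thesis
    by (auto simp: gamma_def connected_in_iff_trancl rtrancl_eq_or_trancl)
qed

definition fibre :: "'a digraph \<Rightarrow> ('a \<Rightarrow> 'b) \<Rightarrow> 'a \<Rightarrow> 'a set" where
  "fibre G \<xi> v = {u \<in> verts G. \<xi> u = \<xi> v}"

lemma Gamma_eq_rtrancl_Image:
  "v \<in> verts G \<Longrightarrow> Gamma G \<xi> v = (adjacency_within G (fibre G \<xi> v))\<^sup>* `` {v}"
  unfolding Gamma_def fibre_def[symmetric] by (rule gamma_eq_rtrancl_Image) (simp add: fibre_def)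

lemma Gamma_subset_fibre: "Gamma G \<xi> v \<subseteq> fibre G \<xi> v"
  unfolding Gamma_def gamma_def fibre_def by blast

lemma self_in_Gamma: "v \<in> verts G \<Longrightarrow> v \<in> Gamma G \<xi> v"
  by (simp add: Gamma_eq_rtrancl_Image)

lemma finite_Gamma: "is_digraph G \<Longrightarrow> finite (Gamma G \<xi> v)"
  using Gamma_subset_fibre by (rule finite_subset) (simp add: fibre_def is_digraph_def)

lemma Gamma_eq_if_mem_Gamma:
  assumes v: "v \<in> verts G" and u: "u \<in> Gamma G \<xi> v"
  shows "Gamma G \<xi> u = Gamma G \<xi> v"
proof -
  have "u \<in> verts G" "\<xi> u = \<xi> v" using u Gamma_subset_fibre[of G \<xi> v] unfolding fibre_def by auto
  then have u_fibre: "fibre G \<xi> u = fibre G \<xi> v" unfolding fibre_def by simp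
  define E where "E = adjacency_within G (fibre G \<xi> v)"
  have "(v, u) \<in> E\<^sup>*" using u v unfolding E_def by (simp add: Gamma_eq_rtrancl_Image)
  moreover have "(u, v) \<in> E\<^sup>*"
    using calculation sym_rtrancl[OF sym_adjacency_within] unfolding E_def by (meson symD)
  ultimately have "E\<^sup>* `` {u} = E\<^sup>* `` {v}" by (auto intro: rtrancl_trans)
  then show ?thesis
    using v \<open>u \<in> verts G\<close> u_fibre unfolding E_def by (simp add: Gamma_eq_rtrancl_Image)
qed

lemma mem_Gamma_if_adjacent:
  assumes "u \<in> verts G" "w \<in> verts G" "adjacent G u w" "\<xi> u = \<xi> w"
  shows "w \<in> Gamma G \<xi> u"
proof -
  have "(u, w) \<in> adjacency_within G (fibre G \<xi> u)"
    using assms unfolding adjacency_within_def fibre_def by auto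
  then show ?thesis using assms(1) by (simp add: Gamma_eq_rtrancl_Image)
qed

lemma Gamma_mono:
  assumes v: "v \<in> verts G"
    and fg: "\<And>u w. u \<in> verts G \<Longrightarrow> w \<in> verts G \<Longrightarrow> adjacent G u w \<Longrightarrow> f u = f w \<Longrightarrow> g u = g w"
  shows "Gamma G f v \<subseteq> Gamma G g v"
proof
  fix w assume "w \<in> Gamma G f v"
  then have "(v, w) \<in> (adjacency_within G (fibre G f v))\<^sup>*"
    using v by (simp add: Gamma_eq_rtrancl_Image)
  then have "(v, w) \<in> (adjacency_within G (fibre G g v))\<^sup>* \<and> w \<in> fibre G g v"
  proof (induction rule: rtrancl_induct)
    case base
    then show ?case using v by (simp add: fibre_def)
  next
    case (step y z)
    then have "y \<in> verts G" "z \<in> verts G" "adjacent G y z" "f y = f z"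
      unfolding adjacency_within_def fibre_def by auto
    then have "g y = g z" by (rule fg)
    then have "(y, z) \<in> adjacency_within G (fibre G g v) \<and> z \<in> fibre G g v"
      using step \<open>z \<in> verts G\<close> \<open>adjacent G y z\<close> unfolding adjacency_within_def fibre_def by auto
    then show ?case using step.IH by (auto intro: rtrancl_into_rtrancl)
  qed
  then show "w \<in> Gamma G g v" using v by (simp add: Gamma_eq_rtrancl_Image)
qed

lemma Gamma_cong:
  assumes "v \<in> verts G"
    and "\<And>u w. u \<in> verts G \<Longrightarrow> w \<in> verts G \<Longrightarrow> adjacent G u w \<Longrightarrow> f u = f w \<longleftrightarrow> g u = g w"
  shows "Gamma G f v = Gamma G g v"
  using Gamma_mono[of v G f g] Gamma_mono[of v G g f] assms by blast

lemma Strict_iff_Gamma_singleton: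
  assumes G: "is_digraph G" and \<xi>: "\<xi> \<in> Hom G H"
  shows "\<xi> \<in> Strict G H \<longleftrightarrow> (\<forall>v \<in> verts G. Gamma G \<xi> v = {v})"
proof
  assume strict: "\<xi> \<in> Strict G H"
  show "\<forall>v \<in> verts G. Gamma G \<xi> v = {v}"
  proof
    fix v assume v: "v \<in> verts G"
    have "Gamma G \<xi> v \<subseteq> Gamma G id v"
      by (rule Gamma_mono[OF v]) (auto simp: adjacent_def dest: Strict_neq[OF strict])
    also have "\<dots> \<subseteq> {v}" using Gamma_subset_fibre[of G id v] by (auto simp: fibre_def)
    finally show "Gamma G \<xi> v = {v}" using self_in_Gamma[OF v] by blast
  qed
next
  assume singleton: "\<forall>v \<in> verts G. Gamma G \<xi> v = {v}"
  show "\<xi> \<in> Strict G H"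
  proof (rule StrictI[OF \<xi>])
    fix v w assume vw: "(v, w) \<in> arcs G" "v \<noteq> w"
    then have "v \<in> verts G" "w \<in> verts G" using arc_in_verts[OF G] by blast+
    then show "\<xi> v \<noteq> \<xi> w"
      using vw singleton mem_Gamma_if_adjacent[of v G w \<xi>] by (auto simp: adjacent_def)
  qed
qed

section \<open>The quotient by the \<open>\<Gamma>\<close>-components\<close>

text \<open>Taking the least vertex as representative makes the quotient depend only on the
  \<open>\<Gamma>\<close>-components, not on the map itself.\<close>

definition component_rep :: "'a::linorder digraph \<Rightarrow> ('a \<Rightarrow> 'b) \<Rightarrow> 'a \<Rightarrow> 'a" where
  "component_rep G \<xi> v = Min (Gamma G \<xi> v)"

definition component_quotient :: "'a::linorder digraph \<Rightarrow> ('a \<Rightarrow> 'b) \<Rightarrow> 'a digraph" where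
  "component_quotient G \<xi> =
     (component_rep G \<xi> ` verts G, map_prod (component_rep G \<xi>) (component_rep G \<xi>) ` arcs G)"

lemma component_rep_in_Gamma: "is_digraph G \<Longrightarrow> v \<in> verts G \<Longrightarrow> component_rep G \<xi> v \<in> Gamma G \<xi> v"
  unfolding component_rep_def using finite_Gamma self_in_Gamma by (metis Min_in empty_iff)

lemma
  assumes "is_digraph G" "v \<in> verts G"
  shows component_rep_in_verts: "component_rep G \<xi> v \<in> verts G"
    and fun_component_rep: "\<xi> (component_rep G \<xi> v) = \<xi> v"
  using component_rep_in_Gamma[OF assms, of \<xi>] Gamma_subset_fibre[of G \<xi> v]
  unfolding fibre_def by auto

lemma component_rep_eq_if_mem_Gamma:
  "v \<in> verts G \<Longrightarrow> u \<in> Gamma G \<xi> v \<Longrightarrow> component_rep G \<xi> u = component_rep G \<xi> v"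
  unfolding component_rep_def by (simp add: Gamma_eq_if_mem_Gamma)

lemma component_rep_eq_if_adjacent:
  "u \<in> verts G \<Longrightarrow> w \<in> verts G \<Longrightarrow> adjacent G u w \<Longrightarrow> \<xi> u = \<xi> w
    \<Longrightarrow> component_rep G \<xi> w = component_rep G \<xi> u"
  by (simp add: component_rep_eq_if_mem_Gamma mem_Gamma_if_adjacent)

lemma verts_component_quotient: "verts (component_quotient G \<xi>) = component_rep G \<xi> ` verts G"
  and arcs_component_quotient:
    "arcs (component_quotient G \<xi>) = map_prod (component_rep G \<xi>) (component_rep G \<xi>) ` arcs G"
  unfolding component_quotient_def verts_def arcs_def by simp_all

lemma is_digraph_component_quotient: "is_digraph G \<Longrightarrow> is_digraph (component_quotient G \<xi>)"
  unfolding is_digraph_def verts_component_quotient arcs_component_quotient by auto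

lemma verts_component_quotient_subset:
  "is_digraph G \<Longrightarrow> verts (component_quotient G \<xi>) \<subseteq> verts G"
  unfolding verts_component_quotient using component_rep_in_verts by blast

lemma component_quotient_cong:
  assumes "is_digraph G" "\<And>v. v \<in> verts G \<Longrightarrow> component_rep G \<xi> v = component_rep G \<zeta> v"
  shows "component_quotient G \<xi> = component_quotient G \<zeta>"
  unfolding component_quotient_def using assms arc_in_verts[OF assms(1)]
  by (auto intro!: image_cong)

lemma component_quotient_eq_self_if_Strict:
  assumes G: "is_digraph G" and \<xi>: "\<xi> \<in> Strict G H"
  shows "component_quotient G \<xi> = G"
proof -
  have "component_rep G \<xi> v = v" if "v \<in> verts G" for v
  proof -
    have "Gamma G \<xi> v = {v}"
      using Strict_iff_Gamma_singleton[OF G Strict_subset_Hom[THEN subsetD, OF \<xi>]] \<xi> that by blast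
    then show ?thesis by (simp add: component_rep_def)
  qed
  then have "component_quotient G \<xi> = (id ` verts G, map_prod id id ` arcs G)"
    unfolding component_quotient_def using arc_in_verts[OF G] by (auto intro!: image_cong)
  then show ?thesis unfolding verts_def arcs_def by (simp add: map_prod.id)
qed

lemma Strict_component_quotient:
  assumes G: "is_digraph G" and \<xi>: "\<xi> \<in> Hom G H"
  shows "restrict \<xi> (verts (component_quotient G \<xi>)) \<in> Strict (component_quotient G \<xi>) H"
proof (intro StrictI HomI)
  show "restrict \<xi> (verts (component_quotient G \<xi>)) \<in> verts (component_quotient G \<xi>) \<rightarrow>\<^sub>E verts H"
    using verts_component_quotient_subset[OF G] Hom_PiE[OF \<xi>] by auto
next
  fix a b assume "(a, b) \<in> arcs (component_quotient G \<xi>)"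
  then obtain u w where uw: "(u, w) \<in> arcs G" and a: "a = component_rep G \<xi> u"
    and b: "b = component_rep G \<xi> w"
    unfolding arcs_component_quotient by auto
  have u: "u \<in> verts G" and w: "w \<in> verts G" using arc_in_verts[OF G uw] by blast+
  have ab: "a \<in> verts (component_quotient G \<xi>)" "b \<in> verts (component_quotient G \<xi>)"
    using u w a b unfolding verts_component_quotient by blast+
  have "\<xi> a = \<xi> u" "\<xi> b = \<xi> w" using a b fun_component_rep[OF G] u w by blast+
  then show "(restrict \<xi> (verts (component_quotient G \<xi>)) a, restrict \<xi> (verts (component_quotient G \<xi>)) b)
      \<in> arcs H"
    using ab Hom_arc[OF \<xi> uw] by simp
  assume "a \<noteq> b"
  then show "restrict \<xi> (verts (component_quotient G \<xi>)) a \<noteq> restrict \<xi> (verts (component_quotient G \<xi>)) b"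
    using ab \<open>\<xi> a = \<xi> u\<close> \<open>\<xi> b = \<xi> w\<close> component_rep_eq_if_adjacent[OF u w, of \<xi>] uw a b
    by (auto simp: adjacent_def)
qed

definition lift_through_quotient :: "'a::linorder digraph \<Rightarrow> ('a \<Rightarrow> 'b) \<Rightarrow> ('a \<Rightarrow> 'c) \<Rightarrow> 'a \<Rightarrow> 'c" where
  "lift_through_quotient G \<xi> \<eta> = restrict (\<eta> \<circ> component_rep G \<xi>) (verts G)"

lemma lift_through_quotient_restrict:
  assumes G: "is_digraph G" and \<xi>: "\<xi> \<in> Hom G H"
  shows "lift_through_quotient G \<xi> (restrict \<xi> (verts (component_quotient G \<xi>))) = \<xi>"
proof (rule PiE_ext[OF _ Hom_PiE[OF \<xi>]])
  show "lift_through_quotient G \<xi> (restrict \<xi> (verts (component_quotient G \<xi>))) \<in> verts G \<rightarrow>\<^sub>E verts H"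
    using Hom_PiE[OF \<xi>] component_rep_in_verts[OF G]
    by (auto simp: lift_through_quotient_def verts_component_quotient fun_component_rep[OF G])
qed (simp add: lift_through_quotient_def verts_component_quotient fun_component_rep[OF G])

lemma lift_through_quotient_cong:
  "(\<And>v. v \<in> verts G \<Longrightarrow> component_rep G \<xi> v = component_rep G \<zeta> v)
    \<Longrightarrow> lift_through_quotient G \<xi> \<eta> = lift_through_quotient G \<zeta> \<eta>"
  unfolding lift_through_quotient_def by (auto intro: restrict_ext)

lemma lift_through_quotient_eqD:
  assumes "lift_through_quotient G \<xi> \<eta> = lift_through_quotient G \<xi> \<eta>'"
    and "\<eta> \<in> verts (component_quotient G \<xi>) \<rightarrow>\<^sub>E A" "\<eta>' \<in> verts (component_quotient G \<xi>) \<rightarrow>\<^sub>E A"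
  shows "\<eta> = \<eta>'"
proof (rule PiE_ext[OF assms(2,3)])
  fix q assume "q \<in> verts (component_quotient G \<xi>)"
  then obtain v where "v \<in> verts G" "q = component_rep G \<xi> v"
    unfolding verts_component_quotient by blast
  then show "\<eta> q = \<eta>' q"
    using fun_cong[OF assms(1), of v] by (simp add: lift_through_quotient_def)
qed

lemma Hom_lift_through_quotient:
  assumes G: "is_digraph G" and \<eta>: "\<eta> \<in> Hom H S"
    and verts_H: "verts (component_quotient G \<xi>) \<subseteq> verts H"
    and arcs_H: "arcs (component_quotient G \<xi>) \<subseteq> arcs H"
  shows "lift_through_quotient G \<xi> \<eta> \<in> Hom G S"
proof (rule HomI)
  show "lift_through_quotient G \<xi> \<eta> \<in> verts G \<rightarrow>\<^sub>E verts S"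
    using PiE_mem[OF Hom_PiE[OF \<eta>]] verts_H
    unfolding lift_through_quotient_def verts_component_quotient by auto
next
  fix v w assume vw: "(v, w) \<in> arcs G"
  then have "(component_rep G \<xi> v, component_rep G \<xi> w) \<in> arcs H"
    using arcs_H unfolding arcs_component_quotient by auto
  then show "(lift_through_quotient G \<xi> \<eta> v, lift_through_quotient G \<xi> \<eta> w) \<in> arcs S"
    using Hom_arc[OF \<eta>] arc_in_verts[OF G vw] unfolding lift_through_quotient_def by simp
qed

lemma Gamma_lift_through_quotient:
  assumes G: "is_digraph G" and \<eta>: "\<eta> \<in> Strict H S" and v: "v \<in> verts G"
    and arcs_H: "arcs (component_quotient G \<xi>) \<subseteq> arcs H"
  shows "Gamma G (lift_through_quotient G \<xi> \<eta>) v = Gamma G \<xi> v"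
proof (rule Gamma_cong[OF v])
  fix u w assume u: "u \<in> verts G" and w: "w \<in> verts G" and adj: "adjacent G u w"
  let ?r = "component_rep G \<xi>"
  have "\<eta> (?r u) \<noteq> \<eta> (?r w)" if "\<xi> u \<noteq> \<xi> w"
  proof -
    have "?r u \<noteq> ?r w" using that fun_component_rep[OF G] u w by metis
    moreover have "(?r u, ?r w) \<in> arcs H \<or> (?r w, ?r u) \<in> arcs H"
      using adj arcs_H unfolding adjacent_def arcs_component_quotient by auto
    ultimately show ?thesis using Strict_neq[OF \<eta>] by metis
  qed
  then have "\<eta> (?r u) = \<eta> (?r w) \<longleftrightarrow> \<xi> u = \<xi> w"
    using component_rep_eq_if_adjacent[OF u w adj] by metis
  then show "lift_through_quotient G \<xi> \<eta> u = lift_through_quotient G \<xi> \<eta> w \<longleftrightarrow> \<xi> u = \<xi> w"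
    using u w unfolding lift_through_quotient_def by simp
qed

definition strict_injection :: "'c digraph \<Rightarrow> 'a digraph \<Rightarrow> 'b digraph \<Rightarrow> ('c \<Rightarrow> 'a) \<Rightarrow> 'c \<Rightarrow> 'b" where
  "strict_injection H R S = (SOME f. f ` Strict H R \<subseteq> Strict H S \<and> inj_on f (Strict H R))"

lemma strict_injection:
  assumes "finite (verts H)" "finite (verts R)" "finite (verts S)"
    and "card (Strict H R) \<le> card (Strict H S)"
  shows "strict_injection H R S ` Strict H R \<subseteq> Strict H S \<and> inj_on (strict_injection H R S) (Strict H R)"
  unfolding strict_injection_def
  by (rule someI_ex[of "\<lambda>f. f ` Strict H R \<subseteq> Strict H S \<and> inj_on f (Strict H R)"],
      rule card_le_inj[OF finite_Strict[OF assms(1,2)] finite_Strict[OF assms(1,3)] assms(4)])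

section \<open>\<open>\<Gamma>\<close>-schemes from counts of strict homomorphisms\<close>

text \<open>\<open>F\<close> turns a quotient into a test digraph: the identity, or the transitive closure
  for posets.\<close>

locale quotient_scheme =
  fixes Dr :: "nat digraph set" and R :: "'a digraph" and S :: "'b digraph"
    and F :: "nat digraph \<Rightarrow> nat digraph"
  assumes is_digraph_R: "is_digraph R" and is_digraph_S: "is_digraph S"
    and is_digraph_Dr: "\<And>G. G \<in> Dr \<Longrightarrow> is_digraph G"
    and verts_F: "\<And>Q. verts (F Q) = verts Q"
    and arcs_F: "\<And>Q. arcs Q \<subseteq> arcs (F Q)"
    and Strict_F: "\<And>G \<xi>. G \<in> Dr \<Longrightarrow> \<xi> \<in> Hom G R \<Longrightarrow>
      restrict \<xi> (verts (component_quotient G \<xi>)) \<in> Strict (F (component_quotient G \<xi>)) R"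
    and card_Strict_F: "\<And>G \<xi>. G \<in> Dr \<Longrightarrow> \<xi> \<in> Hom G R \<Longrightarrow>
      card (Strict (F (component_quotient G \<xi>)) R) \<le> card (Strict (F (component_quotient G \<xi>)) S)"
begin

definition scheme :: "nat digraph \<Rightarrow> (nat \<Rightarrow> 'a) \<Rightarrow> nat \<Rightarrow> 'b" where
  "scheme G \<xi> = lift_through_quotient G \<xi>
     (strict_injection (F (component_quotient G \<xi>)) R S (restrict \<xi> (verts (component_quotient G \<xi>))))"

lemma strict_injection_F:
  assumes "G \<in> Dr" "\<xi> \<in> Hom G R"
  defines "H \<equiv> F (component_quotient G \<xi>)"
  shows "strict_injection H R S ` Strict H R \<subseteq> Strict H S \<and> inj_on (strict_injection H R S) (Strict H R)"
proof (rule strict_injection)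
  show "finite (verts H)"
    using is_digraph_component_quotient[OF is_digraph_Dr[OF assms(1)]]
    unfolding H_def verts_F is_digraph_def by blast
  show "card (Strict H R) \<le> card (Strict H S)" unfolding H_def using card_Strict_F[OF assms(1,2)] .
qed (use is_digraph_R is_digraph_S in \<open>simp_all add: is_digraph_def\<close>)

lemma scheme_Hom_and_Gamma:
  assumes G: "G \<in> Dr" and \<xi>: "\<xi> \<in> Hom G R"
  shows "scheme G \<xi> \<in> Hom G S" and "v \<in> verts G \<Longrightarrow> Gamma G (scheme G \<xi>) v = Gamma G \<xi> v"
proof -
  have "strict_injection (F (component_quotient G \<xi>)) R S (restrict \<xi> (verts (component_quotient G \<xi>)))
      \<in> Strict (F (component_quotient G \<xi>)) S"
    using strict_injection_F[OF G \<xi>] Strict_F[OF G \<xi>] by blast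
  note \<eta> = this Strict_subset_Hom[THEN subsetD, OF this]
  show "scheme G \<xi> \<in> Hom G S"
    unfolding scheme_def by (rule Hom_lift_through_quotient[OF is_digraph_Dr[OF G] \<eta>(2)])
      (simp_all add: verts_F arcs_F)
  show "Gamma G (scheme G \<xi>) v = Gamma G \<xi> v" if "v \<in> verts G"
    unfolding scheme_def by (rule Gamma_lift_through_quotient[OF is_digraph_Dr[OF G] \<eta>(1) that arcs_F])
qed

lemma inj_on_scheme:
  assumes G: "G \<in> Dr"
  shows "inj_on (scheme G) (Hom G R)"
proof
  fix \<xi> \<zeta> assume \<xi>: "\<xi> \<in> Hom G R" and \<zeta>: "\<zeta> \<in> Hom G R" and eq: "scheme G \<xi> = scheme G \<zeta>"
  have Gd: "is_digraph G" using is_digraph_Dr[OF G] .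
  have rep: "component_rep G \<xi> v = component_rep G \<zeta> v" if "v \<in> verts G" for v
    using scheme_Hom_and_Gamma(2)[OF G \<xi> that] scheme_Hom_and_Gamma(2)[OF G \<zeta> that] eq
    unfolding component_rep_def by simp
  define Q where "Q = component_quotient G \<xi>"
  have Q_\<zeta>: "component_quotient G \<zeta> = Q" unfolding Q_def using component_quotient_cong[OF Gd rep] by simp
  let ?\<iota> = "strict_injection (F Q) R S"
  have \<iota>: "?\<iota> ` Strict (F Q) R \<subseteq> Strict (F Q) S" "inj_on ?\<iota> (Strict (F Q) R)"
    using strict_injection_F[OF G \<xi>] unfolding Q_def by blast+
  have strict: "restrict \<xi> (verts Q) \<in> Strict (F Q) R" "restrict \<zeta> (verts Q) \<in> Strict (F Q) R"
    using Strict_F[OF G \<xi>] Strict_F[OF G \<zeta>] unfolding Q_def Q_\<zeta> by simp_all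
  have PiE: "?\<iota> (restrict \<phi> (verts Q)) \<in> verts Q \<rightarrow>\<^sub>E verts S" if "restrict \<phi> (verts Q) \<in> Strict (F Q) R" for \<phi>
  proof -
    have strict_S: "?\<iota> (restrict \<phi> (verts Q)) \<in> Strict (F Q) S" using \<iota>(1) that by blast
    show ?thesis using Hom_PiE[OF Strict_subset_Hom[THEN subsetD, OF strict_S]] by (simp add: verts_F)
  qed
  have "lift_through_quotient G \<xi> (?\<iota> (restrict \<xi> (verts Q)))
      = lift_through_quotient G \<xi> (?\<iota> (restrict \<zeta> (verts Q)))"
    using eq lift_through_quotient_cong[OF rep] unfolding scheme_def Q_def Q_\<zeta> by metis
  then have "?\<iota> (restrict \<xi> (verts Q)) = ?\<iota> (restrict \<zeta> (verts Q))"
    using lift_through_quotient_eqD PiE strict unfolding Q_def by blast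
  then have "restrict \<xi> (verts Q) = restrict \<zeta> (verts Q)"
    using \<iota>(2) strict by (meson inj_onD)
  then show "\<xi> = \<zeta>"
    using lift_through_quotient_restrict[OF Gd \<xi>] lift_through_quotient_restrict[OF Gd \<zeta>]
      lift_through_quotient_cong[OF rep] unfolding Q_def Q_\<zeta> by metis
qed

lemma gamma_below: "gamma_below Dr R S"
  unfolding gamma_below_def hom_scheme_def strong_scheme_def Gamma_scheme_def
  using scheme_Hom_and_Gamma inj_on_scheme by blast

end

lemma digraph_iso_sym: "digraph_iso G H \<Longrightarrow> digraph_iso H G"
proof -
  assume "digraph_iso G H"
  then obtain f where f: "bij_betw f (verts G) (verts H)"
    and arcs: "\<forall>v \<in> verts G. \<forall>w \<in> verts G. (v, w) \<in> arcs G \<longleftrightarrow> (f v, f w) \<in> arcs H"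
    unfolding digraph_iso_def by blast
  let ?g = "inv_into (verts G) f"
  have "bij_betw ?g (verts H) (verts G)" using f by (rule bij_betw_inv_into)
  moreover have "(v, w) \<in> arcs H \<longleftrightarrow> (?g v, ?g w) \<in> arcs G" if "v \<in> verts H" "w \<in> verts H" for v w
    using that arcs f bij_betw_inv_into_right[OF f] bij_betwE[OF bij_betw_inv_into[OF f]] by metis
  ultimately show ?thesis unfolding digraph_iso_def by blast
qed

lemma card_Hom_Strict_le_if_iso:
  fixes G :: "'a digraph" and H :: "'c digraph" and X :: "'b digraph"
  assumes G: "is_digraph G" and X: "is_digraph X" and iso: "digraph_iso G H"
  shows "card (Hom H X) \<le> card (Hom G X) \<and> card (Strict H X) \<le> card (Strict G X)"
proof -
  obtain f where f: "bij_betw f (verts G) (verts H)"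
    and arcs: "\<forall>v \<in> verts G. \<forall>w \<in> verts G. (v, w) \<in> arcs G \<longleftrightarrow> (f v, f w) \<in> arcs H"
    using iso unfolding digraph_iso_def by blast
  define \<Phi> where "\<Phi> \<eta> = restrict (\<eta> \<circ> f) (verts G)" for \<eta> :: "'c \<Rightarrow> 'b"
  have f_arc: "(f u, f w) \<in> arcs H" if "(u, w) \<in> arcs G" for u w
    using arcs arc_in_verts[OF G that] that by blast
  have Hom: "\<Phi> \<eta> \<in> Hom G X" if \<eta>: "\<eta> \<in> Hom H X" for \<eta>
  proof (rule HomI)
    show "\<Phi> \<eta> \<in> verts G \<rightarrow>\<^sub>E verts X"
      using Hom_PiE[OF \<eta>] bij_betwE[OF f] unfolding \<Phi>_def by auto
  qed (use Hom_arc[OF \<eta> f_arc] arc_in_verts[OF G] in \<open>auto simp: \<Phi>_def\<close>)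
  have Strict: "\<Phi> \<eta> \<in> Strict G X" if \<eta>: "\<eta> \<in> Strict H X" for \<eta>
  proof (rule StrictI[OF Hom[OF Strict_subset_Hom[THEN subsetD, OF \<eta>]]])
    fix u w assume uw: "(u, w) \<in> arcs G" "u \<noteq> w"
    then have "f u \<noteq> f w" using arc_in_verts[OF G uw(1)] bij_betw_imp_inj_on[OF f]
      by (auto dest: inj_onD)
    then show "\<Phi> \<eta> u \<noteq> \<Phi> \<eta> w"
      using Strict_neq[OF \<eta> f_arc[OF uw(1)]] arc_in_verts[OF G uw(1)] unfolding \<Phi>_def by simp
  qed
  have inj: "inj_on \<Phi> (Hom H X)"
  proof
    fix \<eta> \<eta>' assume "\<eta> \<in> Hom H X" "\<eta>' \<in> Hom H X" and eq: "\<Phi> \<eta> = \<Phi> \<eta>'"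
    then show "\<eta> = \<eta>'"
    proof (intro PiE_ext[OF Hom_PiE Hom_PiE])
      fix y assume "y \<in> verts H"
      then obtain x where "x \<in> verts G" "y = f x" using f by (auto simp: bij_betw_def)
      then show "\<eta> y = \<eta>' y" using fun_cong[OF eq, of x] unfolding \<Phi>_def by simp
    qed
  qed
  have "finite (verts G)" "finite (verts X)" using G X unfolding is_digraph_def by auto
  then show ?thesis
    using card_inj_on_le[OF inj _ finite_Hom] card_inj_on_le[OF inj_on_subset[OF inj Strict_subset_Hom] _ finite_Strict]
      Hom Strict by blast
qed

lemma card_Hom_Strict_eq_if_iso:
  assumes "is_digraph G" "is_digraph H" "is_digraph X" "digraph_iso G H"
  shows "card (Hom G X) = card (Hom H X)" "card (Strict G X) = card (Strict H X)"
  using card_Hom_Strict_le_if_iso[OF assms(1,3,4)]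
    card_Hom_Strict_le_if_iso[OF assms(2,3) digraph_iso_sym[OF assms(4)]] by simp_all

lemma rep_system_transfer:
  assumes Dr: "rep_system Dr D'" and D': "\<And>G. G \<in> D' \<Longrightarrow> is_digraph G"
    and iso_invariant: "\<And>G H. is_digraph G \<Longrightarrow> is_digraph H \<Longrightarrow> digraph_iso G H \<Longrightarrow> P G \<longleftrightarrow> P H"
    and P: "\<forall>H \<in> Dr. P H"
  shows "\<forall>G \<in> D'. P G"
proof
  fix G assume G: "G \<in> D'"
  then obtain H where "H \<in> Dr" "digraph_iso G H" using Dr unfolding rep_system_def by blast
  moreover have "H \<in> D'" using \<open>H \<in> Dr\<close> Dr unfolding rep_system_def by blast
  ultimately show "P G" using iso_invariant[OF D'[OF G] D'] P by blast
qed

lemma card_le_if_gamma_below: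
  assumes below: "gamma_below Dr R S" and H: "H \<in> Dr" "is_digraph H" and S: "is_digraph S"
  shows "card (Hom H R) \<le> card (Hom H S)" and "card (Strict H R) \<le> card (Strict H S)"
proof -
  obtain \<rho> where \<rho>: "hom_scheme Dr R S \<rho>" "strong_scheme Dr R \<rho>" "Gamma_scheme Dr R \<rho>"
    using below unfolding gamma_below_def by blast
  have inj: "inj_on (\<rho> H) (Hom H R)" using \<rho>(2) H unfolding strong_scheme_def by blast
  have Hom: "\<rho> H ` Hom H R \<subseteq> Hom H S" using \<rho>(1) H unfolding hom_scheme_def by blast
  have Strict: "\<rho> H ` Strict H R \<subseteq> Strict H S"
  proof clarify
    fix \<xi> assume \<xi>: "\<xi> \<in> Strict H R"
    have \<xi>_Hom: "\<xi> \<in> Hom H R" using \<xi> Strict_subset_Hom by blast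
    then have "\<forall>v \<in> verts H. Gamma H (\<rho> H \<xi>) v = {v}"
      using \<rho>(3) H \<xi> Strict_iff_Gamma_singleton[OF H(2) \<xi>_Hom] unfolding Gamma_scheme_def by auto
    moreover have "\<rho> H \<xi> \<in> Hom H S" using Hom \<xi>_Hom by blast
    ultimately show "\<rho> H \<xi> \<in> Strict H S" using Strict_iff_Gamma_singleton[OF H(2)] by blast
  qed
  have "finite (verts H)" "finite (verts S)" using H S unfolding is_digraph_def by auto
  then show "card (Hom H R) \<le> card (Hom H S)" "card (Strict H R) \<le> card (Strict H S)"
    using card_inj_on_le[OF inj Hom finite_Hom]
      card_inj_on_le[OF inj_on_subset[OF inj Strict_subset_Hom] Strict finite_Strict] by blast+
qed

lemma card_le_if_gamma_below_rep_system:
  assumes below: "gamma_below Dr R S" and Dr: "rep_system Dr D'"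
    and D': "\<And>G. G \<in> D' \<Longrightarrow> is_digraph G" and R: "is_digraph R" and S: "is_digraph S"
  shows "\<forall>G \<in> D'. card (Hom G R) \<le> card (Hom G S) \<and> card (Strict G R) \<le> card (Strict G S)"
proof (rule rep_system_transfer[OF Dr D'])
  have "Dr \<subseteq> D'" using Dr unfolding rep_system_def by blast
  then show "\<forall>H \<in> Dr. card (Hom H R) \<le> card (Hom H S) \<and> card (Strict H R) \<le> card (Strict H S)"
    using card_le_if_gamma_below[OF below _ _ S] D' by blast
next
  fix G H assume "is_digraph G" "is_digraph H" "digraph_iso G H"
  then show "card (Hom G R) \<le> card (Hom G S) \<and> card (Strict G R) \<le> card (Strict G S)
      \<longleftrightarrow> card (Hom H R) \<le> card (Hom H S) \<and> card (Strict H R) \<le> card (Strict H S)"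
    using card_Hom_Strict_eq_if_iso[OF _ _ R] card_Hom_Strict_eq_if_iso[OF _ _ S] by metis
qed

section \<open>The admissible classes of test digraphs\<close>

lemma arcs_loopfree: "arcs (loopfree G) = {(v, w) \<in> arcs G. v \<noteq> w}"
  and verts_loopfree: "verts (loopfree G) = verts G"
  unfolding loopfree_def arcs_def verts_def by simp_all

lemma is_walk_loopfree_map:
  assumes \<eta>: "\<eta> \<in> Strict G H" and walk: "is_walk (loopfree G) vs"
  shows "is_walk (loopfree H) (map \<eta> vs)"
  unfolding is_walk_def
proof (intro conjI allI impI)
  show "2 \<le> length (map \<eta> vs)" using walk unfolding is_walk_def by simp
  fix i assume i: "Suc i < length (map \<eta> vs)"
  then have "(vs ! i, vs ! Suc i) \<in> arcs G" "vs ! i \<noteq> vs ! Suc i"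
    using walk unfolding is_walk_def arcs_loopfree by auto
  then show "(map \<eta> vs ! i, map \<eta> vs ! Suc i) \<in> arcs (loopfree H)"
    using i Hom_arc[OF Strict_subset_Hom[THEN subsetD, OF \<eta>]] Strict_neq[OF \<eta>]
    unfolding arcs_loopfree by simp
qed

lemma in_Ta_if_Strict:
  assumes G: "is_digraph G" and \<eta>: "\<eta> \<in> Strict G H" and H: "in_Ta H"
  shows "in_Ta G"
  unfolding in_Ta_def
proof (intro conjI notI)
  assume "\<exists>vs. is_closed_walk (loopfree G) vs"
  then obtain vs where walk: "is_walk (loopfree G) vs" and closed: "hd vs = last vs"
    unfolding is_closed_walk_def by blast
  have "vs \<noteq> []" using walk unfolding is_walk_def by auto
  then have "is_closed_walk (loopfree H) (map \<eta> vs)"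
    using is_walk_loopfree_map[OF \<eta> walk] closed unfolding is_closed_walk_def
    by (simp add: hd_map last_map)
  then show False using H unfolding in_Ta_def by blast
qed (rule G)

definition trancl_digraph :: "'a digraph \<Rightarrow> 'a digraph" where
  "trancl_digraph G = (verts G, (arcs G)\<^sup>+)"

lemma verts_trancl_digraph: "verts (trancl_digraph G) = verts G"
  and arcs_trancl_digraph: "arcs (trancl_digraph G) = (arcs G)\<^sup>+"
  unfolding trancl_digraph_def verts_def arcs_def by simp_all

lemma
  assumes "is_poset P"
  shows is_digraph_if_poset: "is_digraph P"
    and poset_refl: "v \<in> verts P \<Longrightarrow> (v, v) \<in> arcs P"
    and poset_antisym: "(v, w) \<in> arcs P \<Longrightarrow> (w, v) \<in> arcs P \<Longrightarrow> v = w"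
    and poset_trans: "(u, v) \<in> arcs P \<Longrightarrow> (v, w) \<in> arcs P \<Longrightarrow> (u, w) \<in> arcs P"
  using assms unfolding is_poset_def by blast+

lemma Strict_trancl_into_poset:
  assumes \<eta>: "\<eta> \<in> Strict G P" and P: "is_poset P" and pq: "(p, q) \<in> (arcs G)\<^sup>+"
  shows "(\<eta> p, \<eta> q) \<in> arcs P \<and> (\<eta> p = \<eta> q \<longrightarrow> p = q)"
  using pq
proof (induction rule: trancl_induct)
  case (base q)
  then show ?case using Hom_arc[OF Strict_subset_Hom[THEN subsetD, OF \<eta>]] Strict_neq[OF \<eta>] by blast
next
  case (step q r)
  have qr: "(\<eta> q, \<eta> r) \<in> arcs P"
    using Hom_arc[OF Strict_subset_Hom[THEN subsetD, OF \<eta>] step(2)] .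
  then have "(\<eta> p, \<eta> r) \<in> arcs P" using step.IH poset_trans[OF P] by blast
  moreover have "p = r" if "\<eta> p = \<eta> r"
  proof -
    have "\<eta> q = \<eta> r" using qr step.IH that poset_antisym[OF P] by metis
    then show "p = r" using Strict_neq[OF \<eta> step(2)] step.IH that by metis
  qed
  ultimately show ?case by blast
qed

lemma Strict_trancl_digraph:
  assumes \<eta>: "\<eta> \<in> Strict G P" and P: "is_poset P"
  shows "\<eta> \<in> Strict (trancl_digraph G) P"
proof (intro StrictI HomI)
  show "\<eta> \<in> verts (trancl_digraph G) \<rightarrow>\<^sub>E verts P"
    using Hom_PiE[OF Strict_subset_Hom[THEN subsetD, OF \<eta>]] by (simp add: verts_trancl_digraph)
qed (use Strict_trancl_into_poset[OF \<eta> P] in \<open>auto simp: arcs_trancl_digraph\<close>)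

lemma is_poset_trancl_digraph:
  assumes G: "is_digraph G" and refl: "\<forall>v \<in> verts G. (v, v) \<in> arcs G"
    and \<eta>: "\<eta> \<in> Strict G P" and P: "is_poset P"
  shows "is_poset (trancl_digraph G)"
  unfolding is_poset_def verts_trancl_digraph arcs_trancl_digraph
proof (intro conjI allI impI ballI)
  show "is_digraph (trancl_digraph G)"
    using G trancl_subset_Sigma[of "arcs G" "verts G"]
    unfolding is_digraph_def verts_trancl_digraph arcs_trancl_digraph by blast
  show "(v, v) \<in> (arcs G)\<^sup>+" if "v \<in> verts G" for v using refl that by blast
  show "v = w" if "(v, w) \<in> (arcs G)\<^sup>+ \<and> (w, v) \<in> (arcs G)\<^sup>+" for v w
    using that Strict_trancl_into_poset[OF \<eta> P] poset_antisym[OF P] by metis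
  show "(u, w) \<in> (arcs G)\<^sup>+" if "(u, v) \<in> (arcs G)\<^sup>+ \<and> (v, w) \<in> (arcs G)\<^sup>+" for u v w
    using that by (meson trancl_trans)
qed

lemma is_digraph_loopfree: "is_digraph G \<Longrightarrow> is_digraph (loopfree G)"
  unfolding is_digraph_def verts_loopfree arcs_loopfree by auto

lemma is_digraph_if_poset_star: "is_poset_star G \<Longrightarrow> is_digraph G"
  unfolding is_poset_star_def using is_digraph_loopfree is_digraph_if_poset by blast

lemma Strict_eq_Hom_if_poset_star: "is_poset_star P \<Longrightarrow> Strict G P = Hom G P"
  unfolding is_poset_star_def Strict_def by (auto simp: arcs_loopfree dest: Hom_arc)

definition admissible_class :: "nat digraph set \<Rightarrow> 'a digraph \<Rightarrow> bool" where
  "admissible_class D' R \<longleftrightarrow> D' = {G. is_digraph G}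
     \<or> (in_Ta R \<and> {G. in_Ta G} \<subseteq> D' \<and> D' \<subseteq> {G. is_digraph G})
     \<or> (D' = {G. is_poset G} \<and> is_poset R)
     \<or> (D' = {G. is_poset_star G} \<and> is_poset_star R)"

lemma is_digraph_if_admissible_class: "admissible_class D' R \<Longrightarrow> G \<in> D' \<Longrightarrow> is_digraph G"
  unfolding admissible_class_def using is_digraph_if_poset is_digraph_if_poset_star by blast

lemma quotient_scheme_id:
  assumes "is_digraph R" "is_digraph S" "\<And>G. G \<in> Dr \<Longrightarrow> is_digraph G"
    and "\<And>G \<xi>. G \<in> Dr \<Longrightarrow> \<xi> \<in> Hom G R \<Longrightarrow>
      card (Strict (component_quotient G \<xi>) R) \<le> card (Strict (component_quotient G \<xi>) S)"
  shows "quotient_scheme Dr R S (\<lambda>Q. Q)"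
  by unfold_locales (simp_all add: assms Strict_component_quotient)

lemma quotient_scheme_trancl_digraph:
  assumes "is_poset R" "is_digraph S" "\<And>G. G \<in> Dr \<Longrightarrow> is_poset G"
    and "\<And>G \<xi>. G \<in> Dr \<Longrightarrow> \<xi> \<in> Hom G R \<Longrightarrow>
      card (Strict (trancl_digraph (component_quotient G \<xi>)) R)
        \<le> card (Strict (trancl_digraph (component_quotient G \<xi>)) S)"
  shows "quotient_scheme Dr R S trancl_digraph"
proof unfold_locales
  fix G \<xi> assume G: "G \<in> Dr" and \<xi>: "\<xi> \<in> Hom G R"
  show "restrict \<xi> (verts (component_quotient G \<xi>)) \<in> Strict (trancl_digraph (component_quotient G \<xi>)) R"
    using Strict_trancl_digraph[OF Strict_component_quotient[OF is_digraph_if_poset[OF assms(3)[OF G]] \<xi>] assms(1)] .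
next
  show "arcs Q \<subseteq> arcs (trancl_digraph Q)" for Q by (auto simp: arcs_trancl_digraph)
qed (simp_all add: assms is_digraph_if_poset verts_trancl_digraph)

lemma is_poset_trancl_component_quotient:
  assumes G: "is_poset G" and R: "is_poset R" and \<xi>: "\<xi> \<in> Hom G R"
  shows "is_poset (trancl_digraph (component_quotient G \<xi>))"
proof (rule is_poset_trancl_digraph[OF is_digraph_component_quotient[OF is_digraph_if_poset[OF G]] _
      Strict_component_quotient[OF is_digraph_if_poset[OF G] \<xi>] R])
  show "\<forall>q \<in> verts (component_quotient G \<xi>). (q, q) \<in> arcs (component_quotient G \<xi>)"
  proof
    fix q assume "q \<in> verts (component_quotient G \<xi>)"
    then obtain v where v: "v \<in> verts G" "q = component_rep G \<xi> v"
      unfolding verts_component_quotient by blast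
    have "(v, v) \<in> arcs G" using poset_refl[OF G v(1)] .
    then show "(q, q) \<in> arcs (component_quotient G \<xi>)"
      unfolding arcs_component_quotient v(2) by (rule rev_image_eqI) simp
  qed
qed

lemma gamma_below_if_card_Strict_le:
  assumes D': "admissible_class D' R" and Dr: "Dr \<subseteq> D'"
    and R: "is_digraph R" and S: "is_digraph S"
    and card: "\<forall>G \<in> D'. card (Strict G R) \<le> card (Strict G S)"
  shows "gamma_below Dr R S"
proof -
  have Dr_digraph: "\<And>G. G \<in> Dr \<Longrightarrow> is_digraph G"
    using is_digraph_if_admissible_class[OF D'] Dr by blast
  have id_scheme: "quotient_scheme Dr R S (\<lambda>Q. Q)"
    if "\<And>G \<xi>. G \<in> Dr \<Longrightarrow> \<xi> \<in> Hom G R \<Longrightarrow> component_quotient G \<xi> \<in> D'"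
    using quotient_scheme_id[OF R S Dr_digraph] that card by blast
  from D' consider "D' = {G. is_digraph G}" | "in_Ta R" "{G. in_Ta G} \<subseteq> D'"
    | "D' = {G. is_poset G}" "is_poset R" | "D' = {G. is_poset_star G}" "is_poset_star R"
    unfolding admissible_class_def by blast
  then have "quotient_scheme Dr R S (\<lambda>Q. Q) \<or> quotient_scheme Dr R S trancl_digraph"
  proof cases
    case 1
    have "component_quotient G \<xi> \<in> D'" if "G \<in> Dr" for G \<xi>
      using 1 is_digraph_component_quotient[OF Dr_digraph[OF that]] by simp
    then show ?thesis using id_scheme by blast
  next
    case 2
    have "component_quotient G \<xi> \<in> D'" if G: "G \<in> Dr" and \<xi>: "\<xi> \<in> Hom G R" for G \<xi>
      using in_Ta_if_Strict[OF is_digraph_component_quotient Strict_component_quotient[OF _ \<xi>] 2(1)]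
        Dr_digraph[OF G] 2(2) by blast
    then show ?thesis using id_scheme by blast
  next
    case 3
    have poset: "is_poset G" if "G \<in> Dr" for G using that Dr 3(1) by blast
    have "quotient_scheme Dr R S trancl_digraph"
    proof (rule quotient_scheme_trancl_digraph[OF 3(2) S poset])
      fix G \<xi> assume "G \<in> Dr" "\<xi> \<in> Hom G R"
      then have "trancl_digraph (component_quotient G \<xi>) \<in> D'"
        using is_poset_trancl_component_quotient[OF poset 3(2)] 3(1) by blast
      then show "card (Strict (trancl_digraph (component_quotient G \<xi>)) R)
          \<le> card (Strict (trancl_digraph (component_quotient G \<xi>)) S)" using card by blast
    qed
    then show ?thesis ..
  next
    case 4
    have "component_quotient G \<xi> \<in> D'" if G: "G \<in> Dr" and \<xi>: "\<xi> \<in> Hom G R" for G \<xi>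
    proof -
      have strict: "\<xi> \<in> Strict G R" unfolding Strict_eq_Hom_if_poset_star[OF 4(2)] by (rule \<xi>)
      show ?thesis using component_quotient_eq_self_if_Strict[OF Dr_digraph[OF G] strict] G Dr by auto
    qed
    then show ?thesis using id_scheme by blast
  qed
  then show ?thesis using quotient_scheme.gamma_below by blast
qed

theorem theorem2:
  fixes R :: "'a digraph" and S :: "'b digraph"
    and D' Dr :: "nat digraph set"
  assumes R: "is_digraph R"
    and Dr: "rep_system Dr D'"
    and cases: "D' = {G. is_digraph G}
        \<or> (in_Ta R \<and> {G. in_Ta G} \<subseteq> D' \<and> D' \<subseteq> {G. is_digraph G})
        \<or> (D' = {G. is_poset G} \<and> is_poset R)
        \<or> (D' = {G. is_poset_star G} \<and> is_poset_star R)"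
    and S: "is_digraph S"
  shows "(gamma_below Dr R S \<longleftrightarrow> (\<forall>G \<in> D'. card (Strict G R) \<le> card (Strict G S)))
     \<and> ((\<forall>G \<in> D'. card (Strict G R) \<le> card (Strict G S))
          \<longrightarrow> (\<forall>G \<in> D'. card (Hom G R) \<le> card (Hom G S)))"
proof -
  have D': "admissible_class D' R" using cases unfolding admissible_class_def .
  have D'_digraph: "\<And>G. G \<in> D' \<Longrightarrow> is_digraph G" by (rule is_digraph_if_admissible_class[OF D'])
  have "Dr \<subseteq> D'" using Dr unfolding rep_system_def by blast
  then show ?thesis
    using gamma_below_if_card_Strict_le[OF D' _ R S]
      card_le_if_gamma_below_rep_system[OF _ Dr D'_digraph R S] by blast
qed

end
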